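(* Let $k$ be a field and $H\subsetneq\mathbb{N}$ a numerical semigroup with Frobenius number $f$, and let $R=k[[H]]\subseteq k[[t]]$. Then $R$ has minimal canonical conductor if and only if $f-1$ is a quasi-Frobenius number of $H$.
   Context: A numerical semigroup is an additive submonoid $H\subseteq\mathbb{N}$ with $\mathbb{N}\setminus H$ finite; its Frobenius number $f$ is the largest integer not in $H$. An integer $x\notin H$ is a quasi-Frobenius number of $H$ if $x+h\in H$ for all $h\in H$ with $h\neq 0$. $k[[H]]$ is the subring of the power series ring $k[[t]]$ consisting of power series $\sum c_h t^h$ supported on $H$; it is a one-dimensional analytically unramified local domain with integral closure $\overline{R}=k[[t]]$. A one-dimensional singular analytically unramified local domain $R$ with canonical ideal $\omega$ has minimal canonical conductor if $b(\omega)=\mathfrak{c}(R)$, where: $B(\omega)=\bigcup_{n\ge0}(\omega^n:\omega^n)$ with $\omega^n:\omega^n=\{x\in Q(R): x\omega^n\subseteq\omega^n\}$; $b(\omega)=\{x\in B(\omega): xB(\omega)\subseteq R\}$; and $\mathfrak{c}(R)=\{x\in\overline{R}: x\overline{R}\subseteq R\}$. Equivalently, $B(\omega)=\overline{R}$. *)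

theory Defs
  imports "HOL-Computational_Algebra.Formal_Laurent_Series"
begin

definition numerical_semigroup :: "nat set \<Rightarrow> bool" where
  "numerical_semigroup H \<longleftrightarrow>
     0 \<in> H \<and> (\<forall>a\<in>H. \<forall>b\<in>H. a + b \<in> H) \<and> finite (UNIV - H)"

definition frobenius_number :: "nat set \<Rightarrow> nat" where
  "frobenius_number H = Max (UNIV - H)"

definition quasi_frobenius :: "nat set \<Rightarrow> nat \<Rightarrow> bool" where
  "quasi_frobenius H x \<longleftrightarrow> x \<notin> H \<and> (\<forall>h\<in>H. h \<noteq> 0 \<longrightarrow> x + h \<in> H)"

definition semigroup_ring :: "nat set \<Rightarrow> 'a::field fls set" where
  "semigroup_ring H = {F. \<forall>n. fls_nth F n \<noteq> 0 \<longrightarrow> n \<in> int ` H}"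

text \<open>The power series ring k[[t]] inside k((t)) (the integral closure of k[[H]]).\<close>
definition power_series_ring :: "'a::field fls set" where
  "power_series_ring = {F. \<forall>n<0. fls_nth F n = 0}"

definition quot_field :: "'a::field fls set \<Rightarrow> 'a fls set" where
  "quot_field R = {x / y | x y. x \<in> R \<and> y \<in> R \<and> y \<noteq> 0}"

definition mod_prod :: "'a::field fls set \<Rightarrow> 'a fls set \<Rightarrow> 'a fls set" where
  "mod_prod A B = {(\<Sum>i<n. a i * b i) | (n::nat) (a::nat \<Rightarrow> _) (b::nat \<Rightarrow> _). \<forall>i<n. a i \<in> A \<and> b i \<in> B}"

primrec mod_pow :: "'a::field fls set \<Rightarrow> 'a fls set \<Rightarrow> nat \<Rightarrow> 'a fls set" where
  "mod_pow R M 0 = R"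
| "mod_pow R M (Suc n) = mod_prod (mod_pow R M n) M"

definition colon :: "'a::field fls set \<Rightarrow> 'a fls set \<Rightarrow> 'a fls set \<Rightarrow> 'a fls set" where
  "colon R A B = {x \<in> quot_field R. \<forall>y\<in>B. x * y \<in> A}"

definition fractional_ideal :: "'a::field fls set \<Rightarrow> 'a fls set \<Rightarrow> bool" where
  "fractional_ideal R M \<longleftrightarrow>
     M \<subseteq> quot_field R \<and> 0 \<in> M \<and> (\<forall>x\<in>M. \<forall>y\<in>M. x + y \<in> M) \<and>
     (\<forall>r\<in>R. \<forall>x\<in>M. r * x \<in> M) \<and> (\<exists>x\<in>M. x \<noteq> 0) \<and>
     (\<exists>d\<in>R. d \<noteq> 0 \<and> (\<forall>x\<in>M. d * x \<in> R))"

definition canonical_ideal :: "'a::field fls set \<Rightarrow> 'a fls set \<Rightarrow> bool" where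
  "canonical_ideal R \<omega> \<longleftrightarrow> fractional_ideal R \<omega> \<and>
     (\<forall>I. fractional_ideal R I \<longrightarrow> colon R \<omega> (colon R \<omega> I) = I)"

definition blowup :: "'a::field fls set \<Rightarrow> 'a fls set \<Rightarrow> 'a fls set" where
  "blowup R \<omega> = (\<Union>n. colon R (mod_pow R \<omega> n) (mod_pow R \<omega> n))"

definition blowup_conductor :: "'a::field fls set \<Rightarrow> 'a fls set \<Rightarrow> 'a fls set" where
  "blowup_conductor R \<omega> = {x \<in> blowup R \<omega>. \<forall>y\<in>blowup R \<omega>. x * y \<in> R}"

definition conductor :: "'a::field fls set \<Rightarrow> 'a fls set \<Rightarrow> 'a fls set" where
  "conductor R Rbar = {x \<in> Rbar. \<forall>y\<in>Rbar. x * y \<in> R}"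

text \<open>Minimal canonical conductor: b(\<omega>) = c(R) for the canonical ideal \<omega>
  (independent of the choice of \<omega>; we require it for every canonical ideal).\<close>
definition min_canonical_conductor :: "'a::field fls set \<Rightarrow> 'a fls set \<Rightarrow> bool" where
  "min_canonical_conductor R Rbar \<longleftrightarrow>
     (\<forall>\<omega>. canonical_ideal R \<omega> \<longrightarrow> blowup_conductor R \<omega> = conductor R Rbar)"

end

theory Submission
  imports Defs "HOL-Library.Set_Algebras"
begin

unbundle fps_syntax

text \<open>
  Let \<open>f\<close> be the Frobenius number. The Laurent series supported on
  \<open>K\<^sub>H = {z. f - z \<notin> H}\<close> form a canonical ideal \<open>K\<close> of \<open>R = k[[H]]\<close>: for the
  duality \<open>K:(K:I) = I\<close>, a linear functional separating a point from \<open>I\<close> vanishes on a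
  tail of \<open>k((t))\<close>, so it is the coefficient of \<open>t\<^sup>f\<close> in a product with a suitable
  Laurent polynomial. Every canonical ideal is a nonzero multiple of \<open>K\<close>, and the blowup
  \<open>B(\<omega>)\<close> is invariant under scaling \<open>\<omega>\<close>, so only \<open>B(K)\<close> matters.
  If \<open>f - 1 \<notin> H\<close> then \<open>t \<in> K\<close>, hence \<open>K\<^bsup>f+1\<^esup>\<close> contains \<open>1, t, \<dots>, t\<^sup>f\<close>
  and every series of order \<open>> f\<close>, i.e.\ \<open>K\<^bsup>f+1\<^esup> = k[[t]]\<close> and \<open>B(K) = k[[t]]\<close>.
  If \<open>f - 1 \<in> H\<close>, all powers of \<open>K\<close> are supported on \<open>\<nat> - {1}\<close>, so \<open>t\<^bsup>f-1\<^esup>\<close>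
  lies in \<open>b(K)\<close> although \<open>t\<^bsup>f-1\<^esup> \<cdot> t = t\<^sup>f \<notin> R\<close>.
  Finally, \<open>f - 1\<close> is quasi-Frobenius iff \<open>f - 1 \<notin> H\<close>, because \<open>1 \<notin> H\<close>.
\<close>

section \<open>Laurent series with prescribed support\<close>

definition fls_supported :: "int set \<Rightarrow> 'a::zero fls set" where
  "fls_supported A = {F. \<forall>n. F $$ n \<noteq> 0 \<longrightarrow> n \<in> A}"

text \<open>\<open>fls_X_intpow i\<close> abbreviates \<open>fls_shift (-i) 1\<close>; once the simplifier has
  normalised the shift, \<open>fls_X_intpow_nonzero\<close> no longer applies, hence:\<close>
declare fls_shift_eq0_iff [simp]

lemma fls_supportedI: "(\<And>n. F $$ n \<noteq> 0 \<Longrightarrow> n \<in> A) \<Longrightarrow> F \<in> fls_supported A"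
  by (auto simp: fls_supported_def)

lemma fls_supportedD: "F \<in> fls_supported A \<Longrightarrow> F $$ n \<noteq> 0 \<Longrightarrow> n \<in> A"
  by (auto simp: fls_supported_def)

lemma fls_supported_mono: "A \<subseteq> B \<Longrightarrow> fls_supported A \<subseteq> fls_supported B"
  by (auto simp: fls_supported_def)

lemma fls_supported_zero [simp]: "0 \<in> fls_supported A"
  by (simp add: fls_supported_def)

lemma fls_supported_add:
  "F \<in> fls_supported A \<Longrightarrow> G \<in> fls_supported A \<Longrightarrow> F + G \<in> fls_supported A"
  by (rule fls_supportedI) (metis add.right_neutral fls_plus_nth fls_supportedD)

lemma fls_supported_X_intpow: "(fls_X_intpow z :: 'a::field fls) \<in> fls_supported {z}"
  by (simp add: fls_supported_def)

lemma fls_supported_subdegree: "F \<in> fls_supported {fls_subdegree F..}"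
  by (rule fls_supportedI) (metis atLeast_iff fls_eq0_below_subdegree not_le)

lemma fls_supported_mult:
  fixes F G :: "'a::field fls"
  assumes "F \<in> fls_supported A" and "G \<in> fls_supported B"
  shows "F * G \<in> fls_supported (A + B)"
proof (rule fls_supportedI)
  fix n assume "(F * G) $$ n \<noteq> 0"
  then have "(\<Sum>i=fls_subdegree F..n - fls_subdegree G. F $$ i * G $$ (n - i)) \<noteq> 0"
    by (simp add: fls_times_nth(2))
  then obtain i where "F $$ i * G $$ (n - i) \<noteq> 0"
    by (rule sum.not_neutral_contains_not_neutral)
  then have "i + (n - i) \<in> A + B"
    using assms by (intro set_plus_intro fls_supportedD) auto
  then show "n \<in> A + B" by simp
qed

lemma atLeast_plus_atLeast: "{a..} + {b..} = {a + b :: int..}"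
proof
  show "{a..} + {b..} \<subseteq> {a + b..}" by (auto elim!: set_plus_elim)
  show "{a + b..} \<subseteq> {a..} + {b..}"
  proof
    fix c assume "c \<in> {a + b..}"
    then have "a + (c - a) \<in> {a..} + {b..}" by (intro set_plus_intro) auto
    then show "c \<in> {a..} + {b..}" by simp
  qed
qed

lemma fls_supported_mult_atLeast:
  fixes F G :: "'a::field fls"
  shows "F \<in> fls_supported {a..} \<Longrightarrow> G \<in> fls_supported {b..} \<Longrightarrow> F * G \<in> fls_supported {a + b..}"
  using fls_supported_mult[of F "{a..}" G "{b..}"] by (simp add: atLeast_plus_atLeast)

lemma fls_X_intpow_mult_supported:
  fixes F :: "'a::field fls"
  assumes "F \<in> fls_supported {b..}"
  shows "fls_X_intpow z * F \<in> fls_supported {z + b..}"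
proof -
  have "fls_X_intpow z \<in> (fls_supported {z..} :: 'a fls set)"
    using fls_supported_X_intpow fls_supported_mono by blast
  then show ?thesis using assms by (rule fls_supported_mult_atLeast)
qed

lemma fls_supported_cancel:
  fixes x y :: "'a::field fls"
  assumes "x * y \<in> fls_supported {a..}" and "y \<noteq> 0"
  shows "x \<in> fls_supported {a - fls_subdegree y..}"
proof -
  have "inverse y \<in> fls_supported {- fls_subdegree y..}"
    using fls_supported_subdegree[of "inverse y"] by simp
  from fls_supported_mult_atLeast[OF assms(1) this]
  show ?thesis using assms(2) by (simp add: field_simps)
qed

definition fls_trunc :: "int \<Rightarrow> int \<Rightarrow> 'a::field fls \<Rightarrow> 'a fls" where
  "fls_trunc a b F = (\<Sum>p\<in>{a..<b}. fls_const (F $$ p) * fls_X_intpow p)"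

lemma fls_trunc_nth: "fls_trunc a b F $$ n = (if a \<le> n \<and> n < b then F $$ n else 0)"
  by (simp add: fls_trunc_def fls_nth_sum if_distrib sum.delta' cong: if_cong)

lemma fls_minus_trunc_supported:
  assumes "F \<in> fls_supported {a..}"
  shows "F - fls_trunc a b F \<in> fls_supported {b..}"
  using assms by (auto simp: fls_supported_def fls_trunc_nth not_le)

section \<open>Linear functionals on Laurent series\<close>

lemma vector_space_field_mult: "vector_space ((*) :: 'a::field \<Rightarrow> 'a \<Rightarrow> 'a)"
  by unfold_locales (auto simp: algebra_simps)

global_interpretation fls_vs: vector_space "\<lambda>c (F :: 'a::field fls). fls_const c * F"
  by unfold_locales (auto simp: algebra_simps fls_plus_const[symmetric])

lemma (in vector_space) separating_linear_functional:
  assumes "subspace S" and "y \<notin> S"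
  obtains g where "Vector_Spaces.linear scale (*) g" and "\<And>x. x \<in> S \<Longrightarrow> g x = 0" and "g y = 1"
proof -
  interpret field_vs: vector_space "(*) :: 'a \<Rightarrow> 'a \<Rightarrow> 'a" by (fact vector_space_field_mult)
  interpret vector_space_pair scale "(*) :: 'a \<Rightarrow> 'a \<Rightarrow> 'a" ..
  obtain B where B: "B \<subseteq> S" "independent B" "S \<subseteq> span B"
    using maximal_independent_subset[of S] by blast
  have span_B: "span B = S" using span_subspace[OF B(1) B(3) assms(1)] .
  then have "independent (insert y B)"
    using independent_insertI B(2) assms(2) by simp
  then obtain g where g: "Vector_Spaces.linear scale (*) g"
    and g_basis: "\<forall>x\<in>insert y B. g x = (if x = y then 1 else 0)"
    using linear_independent_extend[of "insert y B" "\<lambda>x. if x = y then 1 else 0"] by auto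
  have "g x = 0" if "x \<in> S" for x
  proof -
    have "\<forall>b\<in>B. g b = 0" using g_basis B(1) assms(2) by auto
    then show ?thesis using linear_eq_0_on_span[OF g] that span_B by blast
  qed
  then show thesis using that g g_basis by simp
qed

lemma linear_functional_as_coefficient:
  fixes g :: "'a::field fls \<Rightarrow> 'a"
  assumes g: "Vector_Spaces.linear (\<lambda>c F. fls_const c * F) (*) g"
    and tail: "\<And>F. F \<in> fls_supported {a..} \<Longrightarrow> g F = 0"
  shows "\<exists>x. \<forall>s\<in>fls_supported {b..}. (x * s) $$ n = g s"
proof -
  interpret g: Vector_Spaces.linear "\<lambda>c F. fls_const c * F" "(*)" g by (fact g)
  define x where "x = (\<Sum>p\<in>{b..<a}. fls_const (g (fls_X_intpow p)) * fls_X_intpow (n - p))"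
  have "(x * s) $$ n = g s" if s: "s \<in> fls_supported {b..}" for s
  proof -
    have coeff: "(fls_X_intpow (n - p) * s) $$ n = s $$ p" for p
      by (simp only: fls_X_intpow_times_conv_shift fls_shift_nth) simp
    have "(x * s) $$ n = (\<Sum>p\<in>{b..<a}. g (fls_X_intpow p) * s $$ p)"
      unfolding x_def sum_distrib_right fls_nth_sum mult.assoc fls_mult_const_nth coeff ..
    also have "\<dots> = g (fls_trunc b a s)"
      by (simp add: fls_trunc_def g.sum g.scale mult.commute)
    also have "\<dots> = g s"
      using tail[OF fls_minus_trunc_supported[OF s]] g.diff by simp
    finally show ?thesis .
  qed
  then show ?thesis by blast
qed

section \<open>Products and powers of submodules\<close>

lemma mod_prod_mem: "a \<in> A \<Longrightarrow> b \<in> B \<Longrightarrow> a * b \<in> mod_prod A B"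
  unfolding mod_prod_def by (rule CollectI, rule exI[of _ 1]) auto

lemma mod_prod_zero: "0 \<in> mod_prod A B"
  unfolding mod_prod_def by (rule CollectI, rule exI[of _ 0]) simp

lemma mod_prod_add:
  assumes "x \<in> mod_prod A B" and "y \<in> mod_prod A B"
  shows "x + y \<in> mod_prod A B"
proof -
  obtain m :: nat and a b where x: "x = (\<Sum>i<m. a i * b i)" "\<forall>i<m. a i \<in> A \<and> b i \<in> B"
    using assms(1) unfolding mod_prod_def by blast
  obtain m' :: nat and a' b' where y: "y = (\<Sum>i<m'. a' i * b' i)" "\<forall>i<m'. a' i \<in> A \<and> b' i \<in> B"
    using assms(2) unfolding mod_prod_def by blast
  define c where "c i = (if i < m then a i else a' (i - m))" for i
  define d where "d i = (if i < m then b i else b' (i - m))" for i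
  have "(\<Sum>i<m + m'. c i * d i) = (\<Sum>i<m. c i * d i) + (\<Sum>i<m'. c (m + i) * d (m + i))"
    by (induction m') (simp_all add: add.assoc)
  then have "x + y = (\<Sum>i<m + m'. c i * d i)"
    by (simp add: x y c_def d_def)
  moreover have "\<forall>i<m + m'. c i \<in> A \<and> d i \<in> B"
    using x(2) y(2) by (auto simp: c_def d_def)
  ultimately show ?thesis unfolding mod_prod_def by blast
qed

lemma mod_prod_subsetI:
  assumes "0 \<in> S" and "\<And>x y. x \<in> S \<Longrightarrow> y \<in> S \<Longrightarrow> x + y \<in> S"
    and "\<And>a b. a \<in> A \<Longrightarrow> b \<in> B \<Longrightarrow> a * b \<in> S"
  shows "mod_prod A B \<subseteq> S"
proof
  fix x assume "x \<in> mod_prod A B"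
  then obtain m :: nat and a b where x: "x = (\<Sum>i<m. a i * b i)" "\<forall>i<m. a i \<in> A \<and> b i \<in> B"
    unfolding mod_prod_def by blast
  have "(\<Sum>i<k. a i * b i) \<in> S" if "k \<le> m" for k
    using that by (induction k) (use assms x(2) in auto)
  then show "x \<in> S" using x(1) by simp
qed

lemma mod_prod_mult_left:
  assumes "\<And>a. a \<in> A \<Longrightarrow> r * a \<in> A" and "x \<in> mod_prod A B"
  shows "r * x \<in> mod_prod A B"
proof -
  have "mod_prod A B \<subseteq> {x. r * x \<in> mod_prod A B}"
    by (rule mod_prod_subsetI)
      (auto simp: distrib_left mod_prod_zero mod_prod_add assms(1) mod_prod_mem simp flip: mult.assoc)
  then show ?thesis using assms(2) by blast
qed

lemma mod_prod_scale_subset: "(c * d) *o mod_prod A B \<subseteq> mod_prod (c *o A) (d *o B)"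
proof -
  have "mod_prod A B \<subseteq> {x. c * d * x \<in> mod_prod (c *o A) (d *o B)}"
  proof (rule mod_prod_subsetI)
    fix a b assume "a \<in> A" "b \<in> B"
    then have "(c * a) * (d * b) \<in> mod_prod (c *o A) (d *o B)"
      by (intro mod_prod_mem) (auto simp: elt_set_times_def)
    then show "a * b \<in> {x. c * d * x \<in> mod_prod (c *o A) (d *o B)}"
      by (simp add: ac_simps)
  qed (auto simp: distrib_left mod_prod_zero mod_prod_add)
  then show ?thesis by (auto simp: elt_set_times_def)
qed

lemma elt_set_times_inverse_cancel: "c \<noteq> 0 \<Longrightarrow> inverse c *o (c *o A) = (A :: 'a::field fls set)"
  by (simp add: set_times_rearrange2)

lemma mod_prod_scale:
  fixes c d :: "'a::field fls"
  assumes "c \<noteq> 0" and "d \<noteq> 0"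
  shows "mod_prod (c *o A) (d *o B) = (c * d) *o mod_prod A B"
proof
  show "(c * d) *o mod_prod A B \<subseteq> mod_prod (c *o A) (d *o B)" by (rule mod_prod_scale_subset)
  have "(c * d) *o ((inverse c * inverse d) *o mod_prod (c *o A) (d *o B)) \<subseteq> (c * d) *o mod_prod A B"
    using mod_prod_scale_subset[of "inverse c" "inverse d" "c *o A" "d *o B"] assms
    by (simp add: elt_set_times_inverse_cancel set_times_mono)
  moreover have "(c * d) * (inverse c * inverse d) = 1" using assms by (simp add: field_simps)
  ultimately show "mod_prod (c *o A) (d *o B) \<subseteq> (c * d) *o mod_prod A B"
    by (simp add: set_times_rearrange2)
qed

lemma mod_pow_scale:
  fixes c :: "'a::field fls"
  assumes "c \<noteq> 0"
  shows "mod_pow R (c *o M) n = c ^ n *o mod_pow R M n"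
  by (induction n) (simp_all add: mod_prod_scale assms mult.commute)

lemma colon_scale:
  fixes c :: "'a::field fls"
  assumes "c \<noteq> 0"
  shows "colon R (c *o A) (c *o A) = colon R A A"
proof -
  have mem: "c * u \<in> c *o A \<longleftrightarrow> u \<in> A" for u
    using assms by (auto simp: elt_set_times_def)
  then have mem': "x * (c * u) \<in> c *o A \<longleftrightarrow> x * u \<in> A" for x u
    by (metis mult.left_commute)
  have ball: "(\<forall>y\<in>c *o A. P y) \<longleftrightarrow> (\<forall>a\<in>A. P (c * a))" for P
    by (auto simp: elt_set_times_def)
  show ?thesis by (simp add: colon_def ball mem')
qed

lemma blowup_scale:
  fixes c :: "'a::field fls"
  assumes "c \<noteq> 0"
  shows "blowup R (c *o M) = blowup R M"
  using assms by (simp add: blowup_def mod_pow_scale colon_scale)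

lemma one_mem_mod_pow:
  assumes "1 \<in> R" and "1 \<in> M"
  shows "1 \<in> mod_pow R M n"
proof (induction n)
  case (Suc n)
  then show ?case using mod_prod_mem[OF Suc assms(2)] by simp
qed (simp add: assms(1))

lemma mod_pow_mono:
  assumes "1 \<in> M" and "m \<le> n"
  shows "mod_pow R M m \<subseteq> mod_pow R M n"
proof -
  have "mod_pow R M k \<subseteq> mod_pow R M (Suc k)" for k
    using mod_prod_mem[of _ "mod_pow R M k" 1 M] assms(1) by auto
  then show ?thesis using lift_Suc_mono_le[of "mod_pow R M"] assms(2) by blast
qed

lemma power_mem_mod_pow: "1 \<in> R \<Longrightarrow> x \<in> M \<Longrightarrow> x ^ n \<in> mod_pow R M n"
  by (induction n) (simp_all add: mod_prod_mem power_Suc2 del: power_Suc)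

lemma mod_pow_subset_fls_supported:
  fixes M :: "'a::field fls set"
  assumes "R \<subseteq> fls_supported A" and "M \<subseteq> fls_supported A" and "A + A \<subseteq> A"
  shows "mod_pow R M n \<subseteq> fls_supported A"
proof (induction n)
  case (Suc n)
  show ?case unfolding mod_pow.simps
  proof (rule mod_prod_subsetI)
    fix a b assume "a \<in> mod_pow R M n" and "b \<in> M"
    then have "a * b \<in> fls_supported (A + A)"
      using Suc.IH assms(2) by (intro fls_supported_mult) auto
    then show "a * b \<in> fls_supported A" using fls_supported_mono[OF assms(3)] by blast
  qed (auto intro: fls_supported_add)
qed (simp add: assms(1))

lemma blowup_memE:
  assumes "1 \<in> R" and "1 \<in> M" and "z \<in> blowup R M"
  obtains n where "z \<in> mod_pow R M n"
proof -
  obtain n where "z \<in> colon R (mod_pow R M n) (mod_pow R M n)"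
    using assms(3) unfolding blowup_def by blast
  then have "z * 1 \<in> mod_pow R M n"
    using one_mem_mod_pow[OF assms(1,2)] unfolding colon_def by blast
  then show thesis using that by simp
qed

lemma one_mem_mod_prodE:
  fixes M N :: "'a::field fls set"
  assumes "1 \<in> mod_prod M N"
  obtains m n where "m \<in> M" and "n \<in> N" and "(m * n) $$ 0 \<noteq> 0"
proof -
  obtain k :: nat and a b where ab: "1 = (\<Sum>i<k. a i * b i)" "\<forall>i<k. a i \<in> M \<and> b i \<in> N"
    using assms unfolding mod_prod_def by blast
  have "(\<Sum>i<k. (a i * b i) $$ 0) = 1"
    using arg_cong[OF ab(1), of "\<lambda>F. F $$ 0"] by (simp add: fls_nth_sum)
  then have "(\<Sum>i<k. (a i * b i) $$ 0) \<noteq> 0" by simp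
  then obtain i where "i \<in> {..<k}" and "(a i * b i) $$ 0 \<noteq> 0"
    by (rule sum.not_neutral_contains_not_neutral)
  then show thesis using that ab(2) by blast
qed

lemma fractional_idealD:
  assumes "fractional_ideal R M"
  shows "0 \<in> M" and "x \<in> M \<Longrightarrow> y \<in> M \<Longrightarrow> x + y \<in> M" and "r \<in> R \<Longrightarrow> x \<in> M \<Longrightarrow> r * x \<in> M"
  using assms unfolding fractional_ideal_def by auto

locale proper_numerical_semigroup =
  fixes H :: "nat set"
  assumes numerical_semigroup: "numerical_semigroup H" and proper: "H \<noteq> UNIV"
begin

abbreviation frob :: nat where "frob \<equiv> frobenius_number H"

abbreviation R :: "'a::field fls set" where "R \<equiv> semigroup_ring H"

lemma zero_mem: "0 \<in> H" and add_mem: "a \<in> H \<Longrightarrow> b \<in> H \<Longrightarrow> a + b \<in> H"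
  and finite_gaps: "finite (UNIV - H)"
  using numerical_semigroup unfolding numerical_semigroup_def by auto

lemma frob_not_mem: "frob \<notin> H"
proof -
  have "UNIV - H \<noteq> {}" using proper by auto
  then show ?thesis
    using Max_in[OF finite_gaps] unfolding frobenius_number_def by blast
qed

lemma mem_if_gt_frob: "frob < n \<Longrightarrow> n \<in> H"
  using Max_ge[OF finite_gaps, of n] unfolding frobenius_number_def by auto

lemma one_not_mem: "1 \<notin> H"
proof
  assume "1 \<in> H"
  then have "n \<in> H" for n
  proof (induction n)
    case (Suc n)
    then show ?case using add_mem[of n 1] \<open>1 \<in> H\<close> by simp
  qed (rule zero_mem)
  then show False using frob_not_mem by blast
qed

lemma frob_pos: "0 < frob"
  using frob_not_mem zero_mem by (cases frob) auto

lemma quasi_frobenius_pred_frob_iff: "quasi_frobenius H (frob - 1) \<longleftrightarrow> frob - 1 \<notin> H"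
proof -
  have "frob - 1 + h \<in> H" if "h \<in> H" "h \<noteq> 0" for h
    using that one_not_mem frob_pos by (intro mem_if_gt_frob) (cases "h = 1"; auto)
  then show ?thesis unfolding quasi_frobenius_def by blast
qed

lemma semigroup_ring_eq: "R = fls_supported (int ` H)"
  unfolding semigroup_ring_def fls_supported_def by auto

lemma power_series_ring_eq: "power_series_ring = fls_supported {0..}"
  unfolding power_series_ring_def fls_supported_def by auto (metis not_le)

lemma semigroup_ring_mult: "x \<in> R \<Longrightarrow> y \<in> R \<Longrightarrow> x * y \<in> R"
proof -
  have "int ` H + int ` H \<subseteq> int ` H"
    using add_mem by (auto elim!: set_plus_elim simp flip: of_nat_add)
  then show "x \<in> R \<Longrightarrow> y \<in> R \<Longrightarrow> x * y \<in> R"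
    unfolding semigroup_ring_eq using fls_supported_mult fls_supported_mono by blast
qed

lemma semigroup_ring_add: "x \<in> R \<Longrightarrow> y \<in> R \<Longrightarrow> x + y \<in> R"
  unfolding semigroup_ring_eq by (rule fls_supported_add)

lemma fls_const_mem_semigroup_ring: "fls_const c \<in> R"
  using zero_mem by (auto simp: semigroup_ring_def)

lemma one_mem_semigroup_ring: "1 \<in> R"
  using fls_const_mem_semigroup_ring[of 1] by simp

lemma fls_X_intpow_mem_semigroup_ring: "h \<in> H \<Longrightarrow> fls_X_intpow (int h) \<in> R"
  by (auto simp: semigroup_ring_def)

lemma tail_subset_semigroup_ring: "fls_supported {int frob + 1..} \<subseteq> R"
proof -
  have "{int frob + 1..} \<subseteq> int ` H"
  proof
    fix z :: int assume "z \<in> {int frob + 1..}"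
    then have "nat z \<in> H" and "z = int (nat z)" using mem_if_gt_frob by auto
    then show "z \<in> int ` H" by blast
  qed
  then show ?thesis unfolding semigroup_ring_eq by (rule fls_supported_mono)
qed

lemma semigroup_ring_subset_power_series_ring: "R \<subseteq> power_series_ring"
  unfolding semigroup_ring_eq power_series_ring_eq by (rule fls_supported_mono) auto

lemma fls_X_intpow_gt_frob_mem_semigroup_ring:
  assumes "int frob < m"
  shows "fls_X_intpow m \<in> R"
proof -
  have "frob < nat m" and "m = int (nat m)" using assms by auto
  then show ?thesis using fls_X_intpow_mem_semigroup_ring[OF mem_if_gt_frob] by metis
qed

lemma fls_X_intpow_mult_mem_semigroup_ring:
  fixes F :: "'a::field fls"
  assumes "F \<in> fls_supported {b..}" and "int frob < m + b"
  shows "fls_X_intpow m * F \<in> R"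
proof -
  have "{m + b..} \<subseteq> {int frob + 1..}" using assms(2) by auto
  then show ?thesis
    using fls_X_intpow_mult_supported[OF assms(1)] fls_supported_mono tail_subset_semigroup_ring
    by blast
qed

lemma quot_field_semigroup_ring: "quot_field (R :: 'a::field fls set) = UNIV"
proof -
  have "F \<in> quot_field R" for F :: "'a fls"
  proof -
    define d :: "'a fls" where "d = fls_X_intpow (int frob + 1 + \<bar>fls_subdegree F\<bar>)"
    have "d \<in> R" unfolding d_def by (rule fls_X_intpow_gt_frob_mem_semigroup_ring) simp
    moreover have "d * F \<in> R"
      unfolding d_def by (rule fls_X_intpow_mult_mem_semigroup_ring[OF fls_supported_subdegree]) simp
    moreover have "d \<noteq> 0" unfolding d_def by simp
    ultimately show ?thesis unfolding quot_field_def
      by (intro CollectI exI[of _ "d * F"] exI[of _ d]) simp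
  qed
  then show ?thesis by auto
qed

lemma colon_semigroup_ring: "colon R A B = {x. \<forall>y\<in>B. x * y \<in> A}"
  unfolding colon_def quot_field_semigroup_ring by simp

lemma fractional_idealI:
  fixes M :: "'a::field fls set"
  assumes "0 \<in> M" and "\<And>x y. x \<in> M \<Longrightarrow> y \<in> M \<Longrightarrow> x + y \<in> M"
    and "\<And>r x. r \<in> R \<Longrightarrow> x \<in> M \<Longrightarrow> r * x \<in> M"
    and "x \<in> M" and "x \<noteq> 0" and bounded: "M \<subseteq> fls_supported {b..}"
  shows "fractional_ideal R M"
proof -
  define d :: "'a fls" where "d = fls_X_intpow (int frob + 1 + \<bar>b\<bar>)"
  have "d \<in> R" unfolding d_def by (rule fls_X_intpow_gt_frob_mem_semigroup_ring) simp
  moreover have "d * y \<in> R" if "y \<in> M" for y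
    unfolding d_def by (rule fls_X_intpow_mult_mem_semigroup_ring[of y b]) (use bounded that in auto)
  moreover have "d \<noteq> 0" unfolding d_def by simp
  ultimately show ?thesis
    using assms unfolding fractional_ideal_def quot_field_semigroup_ring by blast
qed

lemma fractional_ideal_bounded_below:
  fixes M :: "'a::field fls set"
  assumes "fractional_ideal R M"
  obtains b where "M \<subseteq> fls_supported {b..}"
proof -
  obtain d where d: "d \<in> R" "d \<noteq> 0" "\<forall>x\<in>M. d * x \<in> R"
    using assms unfolding fractional_ideal_def by blast
  have "x \<in> fls_supported {0 - fls_subdegree d..}" if "x \<in> M" for x
    using d semigroup_ring_subset_power_series_ring that
    by (intro fls_supported_cancel) (auto simp: power_series_ring_eq mult.commute)
  then show thesis using that by blast
qed

lemma fractional_ideal_contains_tail: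
  fixes M :: "'a::field fls set"
  assumes "fractional_ideal R M"
  obtains a where "fls_supported {a..} \<subseteq> M"
proof -
  obtain y where y: "y \<in> M" "y \<noteq> 0"
    using assms unfolding fractional_ideal_def by blast
  have "F \<in> M" if F: "F \<in> fls_supported {fls_subdegree y + int frob + 1..}" for F
  proof -
    have "(F / y) * y \<in> fls_supported {fls_subdegree y + int frob + 1..}"
      using F y(2) by simp
    then have "F / y \<in> fls_supported {int frob + 1..}"
      using fls_supported_cancel[OF _ y(2)] by fastforce
    then have "F / y * y \<in> M"
      using tail_subset_semigroup_ring fractional_idealD(3)[OF assms _ y(1)] by blast
    then show ?thesis using y(2) by simp
  qed
  then show thesis using that by blast
qed

lemma fractional_ideal_const_mult:
  "fractional_ideal R M \<Longrightarrow> x \<in> M \<Longrightarrow> fls_const c * x \<in> M"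
  using fractional_idealD(3) fls_const_mem_semigroup_ring by blast

lemma fractional_ideal_subspace:
  "fractional_ideal R (M :: 'a::field fls set) \<Longrightarrow> fls_vs.subspace M"
  unfolding fls_vs.subspace_def using fractional_idealD fractional_ideal_const_mult by blast

lemma fractional_ideal_semigroup_ring: "fractional_ideal R (R :: 'a::field fls set)"
proof (rule fractional_idealI[where x=1 and b=0])
  show "R \<subseteq> fls_supported {0..}"
    using semigroup_ring_subset_power_series_ring power_series_ring_eq by blast
qed (use semigroup_ring_mult semigroup_ring_add one_mem_semigroup_ring in
      \<open>auto simp: semigroup_ring_eq\<close>)

lemma fractional_ideal_colon:
  fixes A B :: "'a::field fls set"
  assumes A: "fractional_ideal R A" and B: "fractional_ideal R B"
  shows "fractional_ideal R (colon R A B)"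
proof -
  obtain a where a: "fls_supported {a..} \<subseteq> A" using fractional_ideal_contains_tail[OF A] .
  obtain b where b: "B \<subseteq> fls_supported {b..}" using fractional_ideal_bounded_below[OF B] .
  obtain \<alpha> where \<alpha>: "A \<subseteq> fls_supported {\<alpha>..}" using fractional_ideal_bounded_below[OF A] .
  obtain y where y: "y \<in> B" "y \<noteq> 0" using B unfolding fractional_ideal_def by blast
  have "fls_X_intpow (a - b) \<in> colon R A B"
    using fls_X_intpow_mult_supported[of _ b "a - b"] a b
    unfolding colon_semigroup_ring by fastforce
  moreover have "colon R A B \<subseteq> fls_supported {\<alpha> - fls_subdegree y..}"
    using fls_supported_cancel[OF _ y(2)] \<alpha> y(1) unfolding colon_semigroup_ring by blast
  ultimately show ?thesis
    using fractional_idealD[OF A] fls_X_intpow_nonzero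
    by (intro fractional_idealI) (auto simp: colon_semigroup_ring distrib_right mult.assoc)
qed

lemma fractional_ideal_mod_prod:
  fixes A B :: "'a::field fls set"
  assumes A: "fractional_ideal R A" and B: "fractional_ideal R B"
  shows "fractional_ideal R (mod_prod A B)"
proof -
  obtain \<alpha> where \<alpha>: "A \<subseteq> fls_supported {\<alpha>..}" using fractional_ideal_bounded_below[OF A] .
  obtain \<beta> where \<beta>: "B \<subseteq> fls_supported {\<beta>..}" using fractional_ideal_bounded_below[OF B] .
  obtain x where x: "x \<in> A" "x \<noteq> 0" using A unfolding fractional_ideal_def by blast
  obtain y where y: "y \<in> B" "y \<noteq> 0" using B unfolding fractional_ideal_def by blast
  have "mod_prod A B \<subseteq> fls_supported {\<alpha> + \<beta>..}"
  proof (rule mod_prod_subsetI)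
    fix a b assume "a \<in> A" and "b \<in> B"
    then show "a * b \<in> fls_supported {\<alpha> + \<beta>..}"
      using \<alpha> \<beta> by (intro fls_supported_mult_atLeast) auto
  qed (auto intro: fls_supported_add)
  then show ?thesis
    using x y mod_prod_mem[OF x(1) y(1)] fractional_idealD(3)[OF A]
    by (intro fractional_idealI[where x="x * y"]) (auto intro: mod_prod_zero mod_prod_add mod_prod_mult_left)
qed

lemma fractional_ideal_mod_pow:
  "fractional_ideal R (M :: 'a::field fls set) \<Longrightarrow> fractional_ideal R (mod_pow R M n)"
  by (induction n) (simp_all add: fractional_ideal_semigroup_ring fractional_ideal_mod_prod)

lemma colon_mod_prod:
  fixes A B C :: "'a::field fls set"
  assumes "fractional_ideal R A"
  shows "colon R A (mod_prod B C) = colon R (colon R A B) C"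
proof -
  have "(\<forall>s\<in>mod_prod B C. x * s \<in> A) \<longleftrightarrow> (\<forall>c\<in>C. \<forall>b\<in>B. x * c * b \<in> A)" for x
  proof
    assume "\<forall>s\<in>mod_prod B C. x * s \<in> A"
    then show "\<forall>c\<in>C. \<forall>b\<in>B. x * c * b \<in> A"
      using mod_prod_mem by (metis mult.assoc mult.commute)
  next
    assume xCB: "\<forall>c\<in>C. \<forall>b\<in>B. x * c * b \<in> A"
    have "mod_prod B C \<subseteq> {s. x * s \<in> A}"
    proof (rule mod_prod_subsetI)
      fix b c assume "b \<in> B" and "c \<in> C"
      then have "x * c * b \<in> A" using xCB by blast
      then show "b * c \<in> {s. x * s \<in> A}" by (simp add: ac_simps)
    qed (use fractional_idealD[OF assms] in \<open>auto simp: distrib_left\<close>)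
    then show "\<forall>s\<in>mod_prod B C. x * s \<in> A" by blast
  qed
  then show ?thesis unfolding colon_semigroup_ring by auto
qed

lemma inverse_mem_semigroup_ring:
  fixes u :: "'a::field fls"
  assumes u: "u \<in> R" and u0: "u $$ 0 \<noteq> 0"
  shows "inverse u \<in> R"
proof -
  let ?w = "inverse u"
  have "u \<noteq> 0" using u0 by auto
  have "u \<in> fls_supported {0..}"
    using u semigroup_ring_subset_power_series_ring power_series_ring_eq by blast
  then have subdeg: "fls_subdegree u = 0" "fls_subdegree ?w = 0"
    using u0 by (auto intro!: fls_subdegree_eqI dest: fls_supportedD)
  have u_supp: "u $$ i \<noteq> 0 \<Longrightarrow> i \<in> int ` H" for i
    using u semigroup_ring_eq fls_supportedD by blast
  have "?w $$ int n = 0" if "n \<notin> H" for n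
    using that
  proof (induction n rule: less_induct)
    case (less n)
    have vanish: "u $$ i * ?w $$ (int n - i) = 0" if "i \<in> {1..int n}" for i
    proof (cases "u $$ i = 0")
      case False
      then obtain h where h: "h \<in> H" "i = int h" using u_supp by blast
      with that have "1 \<le> h" "h \<le> n" by auto
      then have "n - h \<notin> H" using add_mem[of "n - h" h] h(1) less.prems by auto
      moreover have "int n - i = int (n - h)" using h(2) \<open>h \<le> n\<close> by simp
      ultimately show ?thesis using less.IH[of "n - h"] \<open>1 \<le> h\<close> \<open>h \<le> n\<close> by simp
    qed simp
    have "(\<Sum>i=1..int n. u $$ i * ?w $$ (int n - i)) = 0" using vanish by (intro sum.neutral) blast
    moreover have "{0..int n} = insert 0 {1..int n}" by auto
    ultimately have "(u * ?w) $$ int n = u $$ 0 * ?w $$ int n"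
      using subdeg by (simp add: fls_times_nth(2))
    moreover have "n \<noteq> 0" using less.prems zero_mem by metis
    then have "(u * ?w) $$ int n = 0" using \<open>u \<noteq> 0\<close> by simp
    ultimately show ?case using u0 by simp
  qed
  then have "?w \<in> fls_supported (int ` H)"
    using subdeg by (intro fls_supportedI) (metis fls_eq0_below_subdegree imageI nonneg_eq_int not_le)
  then show ?thesis unfolding semigroup_ring_eq .
qed

section \<open>The standard canonical ideal\<close>

definition canonical_exponents :: "int set" where
  "canonical_exponents = {z. \<forall>h\<in>H. z \<noteq> int frob - int h}"

definition standard_canonical_ideal :: "'a::field fls set" where
  "standard_canonical_ideal = fls_supported canonical_exponents"

lemma canonical_exponents_nonneg:
  assumes "z \<in> canonical_exponents"
  shows "0 \<le> z"
proof (rule ccontr)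
  assume "\<not> 0 \<le> z"
  then have "nat (int frob - z) \<in> H" and "z = int frob - int (nat (int frob - z))"
    using mem_if_gt_frob by auto
  with assms show False unfolding canonical_exponents_def by blast
qed

lemma zero_mem_canonical_exponents: "0 \<in> canonical_exponents"
  using frob_not_mem unfolding canonical_exponents_def by auto

lemma one_mem_canonical_exponents_iff: "1 \<in> canonical_exponents \<longleftrightarrow> frob - 1 \<notin> H"
proof -
  have "1 = int frob - int h \<longleftrightarrow> h = frob - 1" for h using frob_pos by linarith
  then show ?thesis unfolding canonical_exponents_def by auto
qed

lemma gt_frob_mem_canonical_exponents: "int frob < z \<Longrightarrow> z \<in> canonical_exponents"
  unfolding canonical_exponents_def by auto

lemma plus_mem_canonical_exponents:
  assumes "h \<in> H" and "z \<in> canonical_exponents"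
  shows "int h + z \<in> canonical_exponents"
  unfolding canonical_exponents_def
proof (intro CollectI ballI notI)
  fix h' assume "h' \<in> H" and "int h + z = int frob - int h'"
  then have "h' + h \<in> H" and "z = int frob - int (h' + h)" using add_mem assms(1) by auto
  then show False using assms(2) unfolding canonical_exponents_def by blast
qed

lemma standard_canonical_ideal_iff:
  "F \<in> standard_canonical_ideal \<longleftrightarrow> (\<forall>h\<in>H. F $$ (int frob - int h) = 0)"
  unfolding standard_canonical_ideal_def fls_supported_def canonical_exponents_def by auto

lemma one_mem_standard_canonical_ideal: "1 \<in> standard_canonical_ideal"
  using zero_mem_canonical_exponents
  unfolding standard_canonical_ideal_def fls_supported_def by simp

lemma standard_canonical_ideal_subset_power_series_ring:
  "standard_canonical_ideal \<subseteq> power_series_ring"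
  unfolding standard_canonical_ideal_def power_series_ring_eq
  using canonical_exponents_nonneg by (intro fls_supported_mono) auto

lemma fractional_ideal_standard_canonical_ideal:
  "fractional_ideal R (standard_canonical_ideal :: 'a::field fls set)"
proof -
  have "int ` H + canonical_exponents \<subseteq> canonical_exponents"
    by (auto elim!: set_plus_elim intro: plus_mem_canonical_exponents)
  then have "r * x \<in> standard_canonical_ideal"
    if "r \<in> R" "x \<in> standard_canonical_ideal" for r x :: "'a fls"
    using that fls_supported_mult fls_supported_mono
    unfolding semigroup_ring_eq standard_canonical_ideal_def by blast
  then show ?thesis
    using one_mem_standard_canonical_ideal standard_canonical_ideal_subset_power_series_ring
    by (intro fractional_idealI[where x=1 and b=0])
      (auto simp: standard_canonical_ideal_def power_series_ring_eq intro: fls_supported_add)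
qed

lemma coefficient_functional_mem_colon:
  fixes I :: "'a::field fls set"
  assumes I: "fractional_ideal R I" and bounded: "I \<subseteq> fls_supported {b..}"
    and x: "\<And>s. s \<in> fls_supported {b..} \<Longrightarrow> (x * s) $$ int frob = g s"
    and g_I: "\<And>i. i \<in> I \<Longrightarrow> g i = 0"
  shows "x \<in> colon R standard_canonical_ideal I"
  unfolding colon_semigroup_ring standard_canonical_ideal_iff
proof (intro CollectI ballI)
  fix i h assume i: "i \<in> I" and h: "h \<in> H"
  have "fls_X_intpow (int h) * i \<in> fls_supported {int h + b..}"
    using i bounded by (intro fls_X_intpow_mult_supported) auto
  moreover have "{int h + b..} \<subseteq> {b..}" by auto
  ultimately have "fls_X_intpow (int h) * i \<in> fls_supported {b..}"
    using fls_supported_mono by (metis subsetD)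
  moreover have "fls_X_intpow (int h) * i \<in> I"
    using fractional_idealD(3)[OF I fls_X_intpow_mem_semigroup_ring[OF h] i] .
  ultimately have "(x * (fls_X_intpow (int h) * i)) $$ int frob = 0" using x g_I by simp
  moreover have "x * (fls_X_intpow (int h) * i) = fls_X_intpow (int h) * (x * i)"
    by (rule mult.left_commute)
  ultimately show "(x * i) $$ (int frob - int h) = 0"
    by (simp add: fls_X_intpow_times_conv_shift)
qed

lemma colon_colon_standard_canonical_ideal:
  fixes I :: "'a::field fls set"
  assumes I: "fractional_ideal R I"
  shows "colon R standard_canonical_ideal (colon R standard_canonical_ideal I) = I"
proof
  show "I \<subseteq> colon R standard_canonical_ideal (colon R standard_canonical_ideal I)"
    unfolding colon_semigroup_ring by (auto simp: mult.commute)
  show "colon R standard_canonical_ideal (colon R standard_canonical_ideal I) \<subseteq> I"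
  proof (rule subsetI, rule ccontr)
    fix y assume y: "y \<in> colon R standard_canonical_ideal (colon R standard_canonical_ideal I)"
      and y_notin: "y \<notin> I"
    obtain g where g: "Vector_Spaces.linear (\<lambda>c F. fls_const c * F) (*) g"
      and g_I: "\<And>x. x \<in> I \<Longrightarrow> g x = 0" and g_y: "g y = 1"
      using fls_vs.separating_linear_functional[OF fractional_ideal_subspace[OF I] y_notin] by blast
    obtain a where "fls_supported {a..} \<subseteq> I" using fractional_ideal_contains_tail[OF I] .
    then have tail: "g F = 0" if "F \<in> fls_supported {a..}" for F using that g_I by blast
    obtain b where "I \<subseteq> fls_supported {b..}" using fractional_ideal_bounded_below[OF I] .
    define b' where "b' = min b (fls_subdegree y)"
    have I_b': "I \<subseteq> fls_supported {b'..}" and y_b': "y \<in> fls_supported {b'..}"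
      using \<open>I \<subseteq> fls_supported {b..}\<close> fls_supported_subdegree[of y]
        fls_supported_mono[of "{b..}" "{b'..}"] fls_supported_mono[of "{fls_subdegree y..}" "{b'..}"]
      by (auto simp: b'_def)
    obtain x where x: "\<And>s. s \<in> fls_supported {b'..} \<Longrightarrow> (x * s) $$ int frob = g s"
      using linear_functional_as_coefficient[OF g tail, where b=b' and n="int frob"] by blast
    have "x \<in> colon R standard_canonical_ideal I"
      using coefficient_functional_mem_colon[OF I I_b' x g_I] .
    then have "y * x \<in> standard_canonical_ideal"
      using y unfolding colon_semigroup_ring by blast
    then have "(y * x) $$ (int frob - int 0) = 0"
      using zero_mem unfolding standard_canonical_ideal_iff by blast
    then have "(x * y) $$ int frob = 0" by (simp add: mult.commute)
    moreover have "(x * y) $$ int frob = 1" using x[OF y_b'] g_y by simp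
    ultimately show False by simp
  qed
qed

lemma canonical_ideal_standard_canonical_ideal:
  "canonical_ideal R (standard_canonical_ideal :: 'a::field fls set)"
  unfolding canonical_ideal_def
  using fractional_ideal_standard_canonical_ideal colon_colon_standard_canonical_ideal by blast

lemma colon_standard_canonical_ideal_self:
  "colon R standard_canonical_ideal standard_canonical_ideal = (R :: 'a::field fls set)"
proof -
  have KR: "colon R standard_canonical_ideal R = (standard_canonical_ideal :: 'a fls set)"
  proof (intro subset_antisym subsetI)
    fix x :: "'a fls" assume "x \<in> colon R standard_canonical_ideal R"
    then have "x * 1 \<in> standard_canonical_ideal"
      using one_mem_semigroup_ring unfolding colon_semigroup_ring by blast
    then show "x \<in> standard_canonical_ideal" by simp
  next
    fix x :: "'a fls" assume x: "x \<in> standard_canonical_ideal"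
    have "y * x \<in> standard_canonical_ideal" if "y \<in> R" for y
      using fractional_idealD(3)[OF fractional_ideal_standard_canonical_ideal that x] .
    then show "x \<in> colon R standard_canonical_ideal R"
      unfolding colon_semigroup_ring by (simp add: mult.commute)
  qed
  have "colon R standard_canonical_ideal (colon R standard_canonical_ideal R) = (R :: 'a fls set)"
    by (rule colon_colon_standard_canonical_ideal[OF fractional_ideal_semigroup_ring])
  then show ?thesis unfolding KR .
qed

lemma mod_prod_colon_standard_canonical_ideal:
  fixes \<omega> :: "'a::field fls set"
  assumes \<omega>: "canonical_ideal R \<omega>"
  shows "mod_prod (colon R standard_canonical_ideal \<omega>) (colon R \<omega> standard_canonical_ideal) = R"
proof -
  let ?K = "standard_canonical_ideal :: 'a fls set"
  let ?MN = "mod_prod (colon R ?K \<omega>) (colon R \<omega> ?K)"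
  have \<omega>_frac: "fractional_ideal R \<omega>"
    and \<omega>_dual: "\<And>I. fractional_ideal R I \<Longrightarrow> colon R \<omega> (colon R \<omega> I) = I"
    using \<omega> unfolding canonical_ideal_def by blast+
  have "colon R ?K ?MN = colon R (colon R ?K (colon R ?K \<omega>)) (colon R \<omega> ?K)"
    by (rule colon_mod_prod[OF fractional_ideal_standard_canonical_ideal])
  also have "\<dots> = ?K"
    by (simp add: colon_colon_standard_canonical_ideal \<omega>_frac \<omega>_dual
        fractional_ideal_standard_canonical_ideal)
  finally have K_MN: "colon R ?K ?MN = ?K" .
  have MN_frac: "fractional_ideal R ?MN"
    using fractional_ideal_standard_canonical_ideal \<omega>_frac
    by (intro fractional_ideal_mod_prod fractional_ideal_colon)
  have "?MN = colon R ?K (colon R ?K ?MN)"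
    by (rule colon_colon_standard_canonical_ideal[OF MN_frac, symmetric])
  also have "\<dots> = R" unfolding K_MN by (rule colon_standard_canonical_ideal_self)
  finally show ?thesis .
qed

lemma canonical_ideal_scaled_standard:
  fixes \<omega> :: "'a::field fls set"
  assumes \<omega>: "canonical_ideal R \<omega>"
  obtains c where "c \<noteq> 0" and "c *o \<omega> = standard_canonical_ideal"
proof -
  let ?K = "standard_canonical_ideal :: 'a fls set"
  have MN: "mod_prod (colon R ?K \<omega>) (colon R \<omega> ?K) = R"
    by (rule mod_prod_colon_standard_canonical_ideal[OF \<omega>])
  then have "1 \<in> mod_prod (colon R ?K \<omega>) (colon R \<omega> ?K)" using one_mem_semigroup_ring by simp
  then obtain m n where m: "m \<in> colon R ?K \<omega>" and n: "n \<in> colon R \<omega> ?K"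
    and unit: "(m * n) $$ 0 \<noteq> 0"
    by (rule one_mem_mod_prodE)
  have "m * n \<in> R" using MN mod_prod_mem[OF m n] by blast
  then have inv: "inverse (m * n) \<in> R" using inverse_mem_semigroup_ring unit by blast
  have "m * n \<noteq> 0" using unit by auto
  then have "m \<noteq> 0" by auto
  have "m *o \<omega> = ?K"
  proof (intro subset_antisym subsetI)
    fix k assume "k \<in> m *o \<omega>"
    then show "k \<in> ?K" using m unfolding colon_semigroup_ring elt_set_times_def by auto
  next
    fix k assume k: "k \<in> ?K"
    have "inverse (m * n) * k \<in> ?K"
      using fractional_idealD(3)[OF fractional_ideal_standard_canonical_ideal inv k] .
    then have w: "n * (inverse (m * n) * k) \<in> \<omega>"
      using n unfolding colon_semigroup_ring by blast
    have "m * (n * (inverse (m * n) * k)) = (m * n) * inverse (m * n) * k"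
      by (simp only: mult.assoc)
    also have "\<dots> = k"
      by (simp only: right_inverse[OF \<open>m * n \<noteq> 0\<close>] mult_1_left)
    finally show "k \<in> m *o \<omega>" using w unfolding elt_set_times_def by (blast intro: sym)
  qed
  with \<open>m \<noteq> 0\<close> show thesis by (rule that)
qed

section \<open>The blowup of the standard canonical ideal\<close>

lemma semigroup_ring_subset_blowup: "(R :: 'a::field fls set) \<subseteq> blowup R M"
proof -
  have "R \<subseteq> colon R (mod_pow R M 0) (mod_pow R M 0)"
    unfolding colon_semigroup_ring by (auto intro: semigroup_ring_mult)
  then show ?thesis unfolding blowup_def by blast
qed

lemma mod_pow_standard_canonical_ideal_subset:
  "mod_pow R (standard_canonical_ideal :: 'a::field fls set) n \<subseteq> power_series_ring"
  using semigroup_ring_subset_power_series_ring standard_canonical_ideal_subset_power_series_ring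
  unfolding power_series_ring_eq
  by (intro mod_pow_subset_fls_supported) (auto simp: atLeast_plus_atLeast)

lemma mod_pow_standard_canonical_ideal_eq:
  assumes "frob - 1 \<notin> H"
  shows "mod_pow R (standard_canonical_ideal :: 'a::field fls set) (Suc frob) = power_series_ring"
proof
  let ?K = "standard_canonical_ideal :: 'a fls set"
  let ?P = "mod_pow R ?K (Suc frob)"
  show "?P \<subseteq> power_series_ring" by (rule mod_pow_standard_canonical_ideal_subset)
  have P_frac: "fractional_ideal R ?P"
    by (rule fractional_ideal_mod_pow[OF fractional_ideal_standard_canonical_ideal])
  have t: "fls_X_intpow 1 \<in> ?K"
    using assms one_mem_canonical_exponents_iff
    unfolding standard_canonical_ideal_def fls_supported_def by simp
  have monomial: "fls_X_intpow p \<in> ?P" if p: "p \<in> {0..<int frob + 1}" for p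
  proof -
    have "fls_X_intpow 1 ^ nat p \<in> mod_pow R ?K (nat p)"
      by (rule power_mem_mod_pow[OF one_mem_semigroup_ring t])
    moreover have "fls_X_intpow 1 ^ nat p = (fls_X_intpow p :: 'a fls)"
      using p by (simp add: fls_X_intpow_power)
    moreover have "mod_pow R ?K (nat p) \<subseteq> ?P"
      using p by (intro mod_pow_mono[OF one_mem_standard_canonical_ideal]) auto
    ultimately show ?thesis by (metis subsetD)
  qed
  show "power_series_ring \<subseteq> ?P"
  proof
    fix F :: "'a fls" assume F: "F \<in> power_series_ring"
    have "F - fls_trunc 0 (int frob + 1) F \<in> ?K"
      using fls_minus_trunc_supported F gt_frob_mem_canonical_exponents
        fls_supported_mono[of "{int frob + 1..}" canonical_exponents]
      unfolding power_series_ring_eq standard_canonical_ideal_def by force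
    then have tail: "F - fls_trunc 0 (int frob + 1) F \<in> ?P"
      using mod_pow_mono[OF one_mem_standard_canonical_ideal, of 1 "Suc frob" R]
        mod_prod_mem[OF one_mem_semigroup_ring] by fastforce
    have "fls_trunc 0 (int frob + 1) F \<in> ?P"
      unfolding fls_trunc_def using monomial
      by (intro fls_vs.subspace_sum[OF fractional_ideal_subspace[OF P_frac]]
          fractional_ideal_const_mult[OF P_frac]) simp
    from fractional_idealD(2)[OF P_frac this tail] show "F \<in> ?P" by simp
  qed
qed

lemma blowup_standard_canonical_ideal:
  assumes "frob - 1 \<notin> H"
  shows "blowup R (standard_canonical_ideal :: 'a::field fls set) = power_series_ring"
proof
  let ?K = "standard_canonical_ideal :: 'a fls set"
  show "blowup R ?K \<subseteq> power_series_ring"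
    using blowup_memE[OF one_mem_semigroup_ring one_mem_standard_canonical_ideal]
      mod_pow_standard_canonical_ideal_subset by blast
  have "power_series_ring \<subseteq> colon R (mod_pow R ?K (Suc frob)) (mod_pow R ?K (Suc frob))"
    unfolding mod_pow_standard_canonical_ideal_eq[OF assms] colon_semigroup_ring power_series_ring_eq
    using fls_supported_mult_atLeast[of _ 0 _ 0] by auto
  then show "power_series_ring \<subseteq> blowup R ?K"
    unfolding blowup_def by blast
qed

lemma mod_pow_standard_canonical_ideal_supported:
  assumes "frob - 1 \<in> H"
  shows "mod_pow R (standard_canonical_ideal :: 'a::field fls set) n \<subseteq> fls_supported ({0..} - {1})"
proof -
  have "({0..} - {1}) + ({0..} - {1}) \<subseteq> {0..} - {1::int}"
  proof
    fix z assume "z \<in> ({0..} - {1}) + ({0..} - {1::int})"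
    then obtain a b where "a \<in> {0..} - {1}" "b \<in> {0..} - {1}" "z = a + b"
      by (auto elim!: set_plus_elim)
    then show "z \<in> {0..} - {1}" by auto
  qed
  moreover have "int ` H \<subseteq> {0..} - {1}" using one_not_mem by auto
  moreover have "canonical_exponents \<subseteq> {0..} - {1}"
    using assms canonical_exponents_nonneg one_mem_canonical_exponents_iff by auto
  ultimately show ?thesis
    unfolding semigroup_ring_eq standard_canonical_ideal_def
    by (intro mod_pow_subset_fls_supported fls_supported_mono)
qed

lemma pred_frob_plus_subset:
  assumes "frob - 1 \<in> H"
  shows "{int frob - 1} + ({0..} - {1}) \<subseteq> int ` H"
proof
  fix z assume "z \<in> {int frob - 1} + ({0..} - {1})"
  then obtain s where s: "s \<in> {0..} - {1}" "z = int frob - 1 + s" by (auto elim!: set_plus_elim)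
  show "z \<in> int ` H"
  proof (cases "s = 0")
    case True
    then have "z = int (frob - 1)" using s frob_pos by simp
    then show ?thesis using assms by blast
  next
    case False
    then have "frob < nat z" "z = int (nat z)" using s by auto
    then show ?thesis using mem_if_gt_frob by (metis imageI)
  qed
qed

lemma blowup_conductor_standard_canonical_ideal_ne_conductor:
  assumes "frob - 1 \<in> H"
  shows "blowup_conductor R (standard_canonical_ideal :: 'a::field fls set)
           \<noteq> conductor R power_series_ring"
proof -
  let ?K = "standard_canonical_ideal :: 'a fls set"
  let ?e = "fls_X_intpow (int frob - 1) :: 'a fls"
  have "?e \<in> blowup_conductor R ?K"
    unfolding blowup_conductor_def
  proof (intro CollectI conjI ballI)
    have "?e = fls_X_intpow (int (frob - 1))" using frob_pos by (simp add: of_nat_diff)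
    then show "?e \<in> blowup R ?K"
      using semigroup_ring_subset_blowup fls_X_intpow_mem_semigroup_ring[OF assms] by auto
    fix y assume "y \<in> blowup R ?K"
    then obtain n where "y \<in> mod_pow R ?K n"
      using blowup_memE one_mem_semigroup_ring one_mem_standard_canonical_ideal by metis
    then have "?e * y \<in> fls_supported ({int frob - 1} + ({0..} - {1}))"
      using mod_pow_standard_canonical_ideal_supported[OF assms]
        fls_supported_mult[OF fls_supported_X_intpow] by blast
    then show "?e * y \<in> R"
      unfolding semigroup_ring_eq using fls_supported_mono[OF pred_frob_plus_subset[OF assms]] by blast
  qed
  moreover have "?e \<notin> conductor R power_series_ring"
  proof
    assume "?e \<in> conductor R power_series_ring"
    moreover have "fls_X_intpow 1 \<in> (power_series_ring :: 'a fls set)"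
      by (simp add: power_series_ring_def)
    ultimately have "?e * fls_X_intpow 1 \<in> R" unfolding conductor_def by blast
    moreover have "?e * fls_X_intpow 1 = fls_X_intpow (int frob)"
      using fls_X_intpow_times_fls_X_intpow[of "int frob - 1" 1] by simp
    ultimately have "fls_X_intpow (int frob) \<in> (fls_supported (int ` H) :: 'a fls set)"
      unfolding semigroup_ring_eq by simp
    then have "int frob \<in> int ` H" by (rule fls_supportedD) simp
    then show False using frob_not_mem by (auto simp: image_iff)
  qed
  ultimately show ?thesis by blast
qed

end

theorem theorem3p1:
  fixes H :: "nat set"
  assumes "numerical_semigroup H" and "H \<noteq> UNIV"
  shows "min_canonical_conductor (semigroup_ring H :: 'a::field fls set) power_series_ring
           \<longleftrightarrow> quasi_frobenius H (frobenius_number H - 1)"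
proof -
  interpret proper_numerical_semigroup H using assms by unfold_locales
  let ?K = "standard_canonical_ideal :: 'a fls set"
  have "min_canonical_conductor (R :: 'a fls set) power_series_ring \<longleftrightarrow> frob - 1 \<notin> H"
  proof
    assume "min_canonical_conductor (R :: 'a fls set) power_series_ring"
    then have "blowup_conductor R ?K = conductor R power_series_ring"
      using canonical_ideal_standard_canonical_ideal unfolding min_canonical_conductor_def by blast
    then show "frob - 1 \<notin> H"
      using blowup_conductor_standard_canonical_ideal_ne_conductor by blast
  next
    assume "frob - 1 \<notin> H"
    have "blowup R \<omega> = power_series_ring" if \<omega>: "canonical_ideal R \<omega>" for \<omega> :: "'a fls set"
    proof -
      obtain c where "c \<noteq> 0" and "c *o \<omega> = ?K"
        using canonical_ideal_scaled_standard[OF \<omega>] .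
      then have "blowup R \<omega> = blowup R ?K" using blowup_scale by metis
      also have "\<dots> = power_series_ring"
        using blowup_standard_canonical_ideal[OF \<open>frob - 1 \<notin> H\<close>] .
      finally show ?thesis .
    qed
    then show "min_canonical_conductor (R :: 'a fls set) power_series_ring"
      unfolding min_canonical_conductor_def blowup_conductor_def conductor_def by simp
  qed
  then show ?thesis using quasi_frobenius_pred_frob_iff by simp
qed

end
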